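(* Let $F$ be a $4$-flipclass of $\mathfrak S_n$. Then the support graph $S_F$ and the time-support graph $TS_F$ are isomorphic (as edge-labelled directed graphs).
   Context: $\mathfrak S_n$ is the symmetric group on $[n]$, $T$ its transpositions, $\ell$ the length w.r.t. simple transpositions. The Bruhat graph $B(\mathfrak S_n)$ has an edge $x\xrightarrow{t}y$ iff $yx^{-1}=t\in T$ and $\ell(x)<\ell(y)$. $P_h(u,v)$ is the set of paths $u=x_0\to\cdots\to x_h=v$ of length $h$. Between two fixed vertices there are $0$ or $2$ paths of length $2$; each is the flip of the other. The $i$-th flip operator $f_i$ ($i\in[h-1]$) on $P_h(u,v)$ replaces $x_{i-1}\to x_i\to x_{i+1}$ by its flip; the orbits of $\langle f_1,\dots,f_{h-1}\rangle$ on $P_h(u,v)$ are $h$-flipclasses. For a flipclass $F$, the support graph $S_F$ is the edge-labelled subgraph of $B(\mathfrak S_n)$ formed by all vertices and edges lying on paths of $F$; the time-support graph $TS_F$ has vertices $(a,i)$, $0\le i\le h$, such that some path $(x_0,\dots,x_h)\in F$ has $x_i=a$, and edges $(a,i)\xrightarrow{t}(b,i+1)$ whenever some path of $F$ contains the edge $x_i=a\xrightarrow{t}b=x_{i+1}$. *)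

theory Defs
  imports "HOL-Combinatorics.Combinatorics"
begin

definition perms :: "nat \<Rightarrow> (nat \<Rightarrow> nat) set" where
  "perms n = {x. x permutes {1..n}}"

definition transps :: "nat \<Rightarrow> (nat \<Rightarrow> nat) set" where
  "transps n = {transpose a b | a b. a \<in> {1..n} \<and> b \<in> {1..n} \<and> a \<noteq> b}"

definition simple_transps :: "nat \<Rightarrow> (nat \<Rightarrow> nat) set" where
  "simple_transps n = {transpose i (Suc i) | i. 1 \<le> i \<and> i < n}"

definition len :: "nat \<Rightarrow> (nat \<Rightarrow> nat) \<Rightarrow> nat" where
  "len n x = (LEAST k. \<exists>ws. length ws = k \<and> set ws \<subseteq> simple_transps n \<and> x = foldr (\<circ>) ws id)"

definition label :: "(nat \<Rightarrow> nat) \<Rightarrow> (nat \<Rightarrow> nat) \<Rightarrow> (nat \<Rightarrow> nat)" where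
  "label x y = y \<circ> inv x"

definition bruhat_edge :: "nat \<Rightarrow> (nat \<Rightarrow> nat) \<Rightarrow> (nat \<Rightarrow> nat) \<Rightarrow> bool" where
  "bruhat_edge n x y \<longleftrightarrow> x \<in> perms n \<and> y \<in> perms n \<and> label x y \<in> transps n \<and> len n x < len n y"

definition paths :: "nat \<Rightarrow> nat \<Rightarrow> (nat \<Rightarrow> nat) \<Rightarrow> (nat \<Rightarrow> nat) \<Rightarrow> (nat \<Rightarrow> nat) list set" where
  "paths n h u v = {xs. length xs = Suc h \<and> xs ! 0 = u \<and> xs ! h = v \<and>
       (\<forall>i<h. bruhat_edge n (xs ! i) (xs ! Suc i))}"

definition flip :: "nat \<Rightarrow> nat \<Rightarrow> (nat \<Rightarrow> nat) list \<Rightarrow> (nat \<Rightarrow> nat) list" where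
  "flip n i xs =
     (if \<exists>y. y \<noteq> xs ! i \<and> bruhat_edge n (xs ! (i - 1)) y \<and> bruhat_edge n y (xs ! Suc i)
      then xs[i := (THE y. y \<noteq> xs ! i \<and> bruhat_edge n (xs ! (i - 1)) y \<and> bruhat_edge n y (xs ! Suc i))]
      else xs)"

definition flip_rel :: "nat \<Rightarrow> nat \<Rightarrow> ((nat \<Rightarrow> nat) list \<times> (nat \<Rightarrow> nat) list) set" where
  "flip_rel n h = {(p, flip n i p) | p i. 1 \<le> i \<and> i \<le> h - 1}"

text \<open>h-flipclass: an orbit of the group generated by f_1..f_{h-1} (involutions) on some P_h(u,v).\<close>
definition is_flipclass :: "nat \<Rightarrow> nat \<Rightarrow> (nat \<Rightarrow> nat) list set \<Rightarrow> bool" where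
  "is_flipclass n h F \<longleftrightarrow>
     (\<exists>u v p. p \<in> paths n h u v \<and> F = {q. (p, q) \<in> (flip_rel n h)\<^sup>*})"

definition S_vert :: "(nat \<Rightarrow> nat) list set \<Rightarrow> (nat \<Rightarrow> nat) set" where
  "S_vert F = {a. \<exists>p\<in>F. a \<in> set p}"

definition S_edges :: "(nat \<Rightarrow> nat) list set \<Rightarrow> ((nat \<Rightarrow> nat) \<times> (nat \<Rightarrow> nat) \<times> (nat \<Rightarrow> nat)) set" where
  "S_edges F = {(p ! i, label (p ! i) (p ! Suc i), p ! Suc i) | p i. p \<in> F \<and> Suc i < length p}"

definition TS_vert :: "(nat \<Rightarrow> nat) list set \<Rightarrow> ((nat \<Rightarrow> nat) \<times> nat) set" where
  "TS_vert F = {(a, i). \<exists>p\<in>F. i < length p \<and> p ! i = a}"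

definition TS_edges :: "(nat \<Rightarrow> nat) list set \<Rightarrow>
    (((nat \<Rightarrow> nat) \<times> nat) \<times> (nat \<Rightarrow> nat) \<times> ((nat \<Rightarrow> nat) \<times> nat)) set" where
  "TS_edges F = {((p ! i, i), label (p ! i) (p ! Suc i), (p ! Suc i, Suc i)) | p i. p \<in> F \<and> Suc i < length p}"

definition labelled_iso :: "'a set \<Rightarrow> ('a \<times> 'l \<times> 'a) set \<Rightarrow> 'b set \<Rightarrow> ('b \<times> 'l \<times> 'b) set \<Rightarrow> bool" where
  "labelled_iso V1 E1 V2 E2 \<longleftrightarrow>
     (\<exists>\<phi>. bij_betw \<phi> V1 V2 \<and> (\<forall>a\<in>V1. \<forall>b\<in>V1. \<forall>t. (a, t, b) \<in> E1 \<longleftrightarrow> (\<phi> a, t, \<phi> b) \<in> E2))"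

end

theory Submission
  imports Defs
begin

text \<open>Sending a vertex \<open>a\<close> of \<open>S\<^sub>F\<close> to \<open>(a, i)\<close>, where \<open>i\<close> is its position, is an isomorphism as soon
  as every vertex occupies the same position on all paths of \<open>F\<close> through it. Signs alternate and
  lengths increase along Bruhat edges, so a vertex \<open>a = p\<^sub>i = q\<^sub>j\<close> with \<open>i < j\<close> forces \<open>i = 1\<close>,
  \<open>j = 3\<close>. The two routes through a Bruhat diamond have labels generating the same equivalence
  relation on letters, so the equivalence relation generated by the supports of the labels of a
  path is constant on \<open>F\<close>. Let \<open>u \<rightarrow> a\<close> carry the label \<open>(c' d')\<close> on \<open>p\<close> and \<open>a \<rightarrow> v\<close> the label
  \<open>(c d)\<close> on \<open>q\<close>. A 3-step Bruhat path from \<open>x\<close> to \<open>(c d) x\<close> only moves \<open>c\<close>, \<open>d\<close> and one letter \<open>z\<close>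
  lying strictly between \<open>c\<close> and \<open>d\<close> both in value and in position in \<open>x\<close>. Applied to the rest of
  \<open>p\<close> and to the beginning of \<open>q\<close>, this gives triples \<open>{c, d, z}\<close> and \<open>{c', d', z'}\<close> which, by
  the invariant, share two letters. But every pair of the first triple is a non-inversion of \<open>a\<close>,
  and every pair of the second one an inversion of \<open>a\<close>.\<close>

section \<open>Length and inversions\<close>

definition inversions :: "nat \<Rightarrow> (nat \<Rightarrow> nat) \<Rightarrow> (nat \<times> nat) set" where
  "inversions n \<sigma> = {(a, b). 1 \<le> a \<and> a < b \<and> b \<le> n \<and> \<sigma> b < \<sigma> a}"

lemma finite_inversions: "finite (inversions n \<sigma>)"
proof (rule finite_subset)
  show "inversions n \<sigma> \<subseteq> {1..n} \<times> {1..n}" by (auto simp: inversions_def)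
qed simp

lemma card_inversions_comp_adjacent_transpose:
  assumes i: "1 \<le> i" "i < n" and asc: "\<sigma> i < \<sigma> (Suc i)"
  shows "card (inversions n (\<sigma> \<circ> transpose i (Suc i))) = Suc (card (inversions n \<sigma>))"
proof -
  let ?s = "transpose i (Suc i)"
  let ?f = "map_prod ?s ?s"
  have "inversions n (\<sigma> \<circ> ?s) = insert (i, Suc i) (?f ` inversions n \<sigma>)"
  proof (intro equalityI subsetI)
    fix p assume p: "p \<in> inversions n (\<sigma> \<circ> ?s)"
    show "p \<in> insert (i, Suc i) (?f ` inversions n \<sigma>)"
    proof (cases "p = (i, Suc i)")
      case False
      with p i have "?f p \<in> inversions n \<sigma>"
        by (cases p) (auto simp: inversions_def transpose_def)
      moreover have "p = ?f (?f p)" by (cases p) simp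
      ultimately show ?thesis by blast
    qed simp
  next
    have "?f (a, b) \<in> inversions n (\<sigma> \<circ> ?s)" if "(a, b) \<in> inversions n \<sigma>" for a b
      using that i asc by (auto simp: inversions_def transpose_def)
    moreover have "(i, Suc i) \<in> inversions n (\<sigma> \<circ> ?s)"
      using i asc by (simp add: inversions_def)
    ultimately show "p \<in> inversions n (\<sigma> \<circ> ?s)" if "p \<in> insert (i, Suc i) (?f ` inversions n \<sigma>)" for p
      using that by auto
  qed
  moreover have "(i, Suc i) \<notin> ?f ` inversions n \<sigma>"
    using asc by (auto simp: inversions_def transpose_def split: if_splits)
  moreover have "inj ?f" by (simp add: prod.inj_map inj_transpose)
  ultimately show ?thesis
    by (simp add: finite_inversions card_image inj_on_subset[of ?f UNIV])
qed

lemma card_inversions_comp_adjacent_transpose_descent: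
  assumes i: "1 \<le> i" "i < n" and desc: "\<sigma> (Suc i) < \<sigma> i"
  shows "Suc (card (inversions n (\<sigma> \<circ> transpose i (Suc i)))) = card (inversions n \<sigma>)"
proof -
  let ?\<tau> = "\<sigma> \<circ> transpose i (Suc i)"
  have "card (inversions n (?\<tau> \<circ> transpose i (Suc i))) = Suc (card (inversions n ?\<tau>))"
    using i desc by (intro card_inversions_comp_adjacent_transpose) auto
  then show ?thesis by (simp add: comp_assoc)
qed

lemma card_inversions_comp_adjacent_transpose_le:
  assumes "inj_on \<sigma> {1..n}" "1 \<le> i" "i < n"
  shows "card (inversions n (\<sigma> \<circ> transpose i (Suc i))) \<le> Suc (card (inversions n \<sigma>))"
proof -
  have "\<sigma> i \<noteq> \<sigma> (Suc i)" using assms by (auto dest: inj_onD)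
  then consider "\<sigma> i < \<sigma> (Suc i)" | "\<sigma> (Suc i) < \<sigma> i" by linarith
  then show ?thesis
    using card_inversions_comp_adjacent_transpose[OF assms(2,3)]
      card_inversions_comp_adjacent_transpose_descent[OF assms(2,3)]
    by cases force+
qed

lemma inj_on_comp_transpose:
  assumes "inj_on \<sigma> A" "p \<in> A" "q \<in> A"
  shows "inj_on (\<sigma> \<circ> transpose p q) A"
  using assms by (simp add: comp_inj_on)

text \<open>Induction on \<open>q - p\<close>, writing \<open>(p q) = (p r) (r q) (p r)\<close> with \<open>r = p + 1\<close>: if \<open>\<sigma> p < \<sigma> r\<close>, the
  first adjacent swap adds an inversion, otherwise \<open>\<sigma> r < \<sigma> q\<close> and the last one does.\<close>
lemma card_inversions_comp_transpose_less:
  "inj_on \<sigma> {1..n} \<Longrightarrow> 1 \<le> p \<Longrightarrow> p < q \<Longrightarrow> q \<le> n \<Longrightarrow> \<sigma> p < \<sigma> q \<Longrightarrow>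
    card (inversions n \<sigma>) < card (inversions n (\<sigma> \<circ> transpose p q))"
proof (induction "q - p" arbitrary: \<sigma> p)
  case 0
  then show ?case by simp
next
  case (Suc k)
  show ?case
  proof (cases "q = Suc p")
    case True
    then show ?thesis using card_inversions_comp_adjacent_transpose[of p n \<sigma>] Suc.prems by simp
  next
    case False
    define r where "r = Suc p"
    have rq: "r < q" and rn: "r < n" using False Suc.prems r_def by auto
    let ?s = "transpose p r"
    define \<sigma>1 where "\<sigma>1 = \<sigma> \<circ> ?s"
    define \<sigma>2 where "\<sigma>2 = \<sigma>1 \<circ> transpose r q"
    have inj1: "inj_on \<sigma>1 {1..n}"
      unfolding \<sigma>1_def using Suc.prems rq r_def by (intro inj_on_comp_transpose) auto
    have decomp: "\<sigma> \<circ> transpose p q = \<sigma>2 \<circ> ?s"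
      unfolding \<sigma>2_def \<sigma>1_def using transpose_comp_triple[of p q r] rq r_def
      by (simp add: comp_assoc)
    have "\<sigma>1 r < \<sigma>1 q" using Suc.prems(5) rq r_def by (simp add: \<sigma>1_def)
    then have IH: "card (inversions n \<sigma>1) < card (inversions n \<sigma>2)"
      unfolding \<sigma>2_def using Suc.hyps(2) Suc.prems(4) inj1 rq r_def
      by (intro Suc.hyps(1)) auto
    have le1: "card (inversions n \<sigma>) \<le> Suc (card (inversions n \<sigma>1))"
      using card_inversions_comp_adjacent_transpose_le[OF inj1, of p] Suc.prems(2) rn r_def
      by (simp add: \<sigma>1_def comp_assoc)
    have "\<sigma>2 = (\<sigma> \<circ> transpose p q) \<circ> ?s" unfolding decomp by (simp add: comp_assoc)
    then have le2: "card (inversions n \<sigma>2) \<le> Suc (card (inversions n (\<sigma> \<circ> transpose p q)))"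
      using card_inversions_comp_adjacent_transpose_le[of "\<sigma> \<circ> transpose p q" n p] Suc.prems rn r_def
      by (simp add: inj_on_comp_transpose)
    have "\<sigma> p \<noteq> \<sigma> r" using inj_onD[OF Suc.prems(1), of p r] Suc.prems(2) rn r_def by auto
    then consider "\<sigma> p < \<sigma> r" | "\<sigma> r < \<sigma> p" by linarith
    then show ?thesis
    proof cases
      case 1
      have "card (inversions n \<sigma>1) = Suc (card (inversions n \<sigma>))"
        unfolding \<sigma>1_def r_def
        by (rule card_inversions_comp_adjacent_transpose) (use 1 Suc.prems(2) rn r_def in auto)
      then show ?thesis using IH le2 by linarith
    next
      case 2
      have "\<sigma>2 p = \<sigma> r" "\<sigma>2 r = \<sigma> q" using rq r_def by (auto simp: \<sigma>1_def \<sigma>2_def)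
      then have "card (inversions n (\<sigma>2 \<circ> ?s)) = Suc (card (inversions n \<sigma>2))"
        unfolding r_def
        by (intro card_inversions_comp_adjacent_transpose) (use 2 Suc.prems(2,5) rn r_def in auto)
      then show ?thesis using IH le1 unfolding decomp by linarith
    qed
  qed
qed

lemma inv_transpose_comp: "bij x \<Longrightarrow> inv (transpose a b \<circ> x) = inv x \<circ> transpose a b"
  by (simp add: o_inv_distrib)

lemma foldr_comp_Cons: "foldr (\<circ>) (s # ws) id = s \<circ> foldr (\<circ>) ws id"
  by (simp add: fun_eq_iff)

lemma foldr_comp_permutes: "set ws \<subseteq> simple_transps n \<Longrightarrow> foldr (\<circ>) ws id permutes {1..n}"
  by (induction ws) (auto simp: simple_transps_def intro!: permutes_compose permutes_swap_id permutes_id)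

lemma card_inversions_inv_foldr_le:
  "set ws \<subseteq> simple_transps n \<Longrightarrow> card (inversions n (inv (foldr (\<circ>) ws id))) \<le> length ws"
proof (induction ws)
  case Nil
  have "inversions n (\<lambda>a. a) = {}" by (auto simp: inversions_def)
  then show ?case by simp
next
  case (Cons s ws)
  let ?y = "foldr (\<circ>) ws id"
  have y: "?y permutes {1..n}" using Cons.prems by (intro foldr_comp_permutes) simp
  from Cons.prems obtain i where s: "s = transpose i (Suc i)" "1 \<le> i" "i < n"
    by (auto simp: simple_transps_def)
  have "inv (s \<circ> ?y) = inv ?y \<circ> transpose i (Suc i)"
    using s(1) permutes_bij[OF y] by (simp add: inv_transpose_comp)
  moreover have "inj_on (inv ?y) {1..n}" using permutes_inv[OF y] by (rule permutes_inj_on)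
  ultimately have "card (inversions n (inv (s \<circ> ?y))) \<le> Suc (card (inversions n (inv ?y)))"
    using card_inversions_comp_adjacent_transpose_le s(2,3) by simp
  moreover have "card (inversions n (inv ?y)) \<le> length ws" using Cons.prems by (intro Cons.IH) simp
  ultimately show ?case unfolding foldr_comp_Cons length_Cons by linarith
qed

lemma adjacent_ascents_imp_less:
  assumes "\<And>i. 1 \<le> i \<Longrightarrow> i < n \<Longrightarrow> (\<sigma> :: nat \<Rightarrow> nat) i < \<sigma> (Suc i)"
  shows "1 \<le> a \<Longrightarrow> a < b \<Longrightarrow> b \<le> n \<Longrightarrow> \<sigma> a < \<sigma> b"
proof (induction b)
  case (Suc b)
  then show ?case using assms[of b] by (cases "a = b") auto
qed simp

lemma increasing_permutes_eq_id:
  assumes p: "(\<sigma> :: nat \<Rightarrow> nat) permutes {1..n}"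
    and mono: "\<And>a b. 1 \<le> a \<Longrightarrow> a < b \<Longrightarrow> b \<le> n \<Longrightarrow> \<sigma> a < \<sigma> b"
  shows "\<sigma> = id"
proof -
  have "\<sigma> i = i" if "i \<in> {1..n}" for i
    using that
  proof (induction i rule: less_induct)
    case (less i)
    have \<sigma>i: "\<sigma> i \<in> {1..n}" using permutes_in_image[OF p] less.prems by simp
    have "\<not> \<sigma> i < i"
    proof
      assume lt: "\<sigma> i < i"
      then have "\<sigma> (\<sigma> i) = \<sigma> i" using less.IH \<sigma>i by simp
      then show False using lt permutes_inj[OF p] by (metis injD less_irrefl)
    qed
    moreover have "\<not> i < \<sigma> i"
    proof
      assume gt: "i < \<sigma> i"
      obtain k where k: "k \<in> {1..n}" "\<sigma> k = i"
        using less.prems p by (metis permutes_inverses(1) permutes_inv permutes_in_image)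
      show False
      proof (cases k i rule: linorder_cases)
        case less
        then show ?thesis using less.IH[of k] k gt by simp
      next
        case equal
        then show ?thesis using k gt by simp
      next
        case greater
        then show ?thesis using mono[of i k] less.prems k gt by simp
      qed
    qed
    ultimately show ?case by simp
  qed
  moreover have "\<sigma> i = i" if "i \<notin> {1..n}" for i using p that by (simp add: permutes_not_in)
  ultimately show ?thesis by (auto simp: fun_eq_iff)
qed

lemma exists_adjacent_descent:
  assumes "inj_on \<sigma> {1..n}" "inversions n \<sigma> \<noteq> {}"
  obtains i where "1 \<le> i" "i < n" "\<sigma> (Suc i) < \<sigma> i"
proof (rule ccontr)
  note descent = that
  assume "\<not> thesis"
  have "\<sigma> i < \<sigma> (Suc i)" if "1 \<le> i" "i < n" for i
  proof -
    have "\<sigma> i \<noteq> \<sigma> (Suc i)" using inj_onD[OF assms(1), of i "Suc i"] that by auto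
    moreover have "\<not> \<sigma> (Suc i) < \<sigma> i" using descent that \<open>\<not> thesis\<close> by blast
    ultimately show ?thesis by simp
  qed
  then have "\<sigma> a < \<sigma> b" if "1 \<le> a" "a < b" "b \<le> n" for a b
    using adjacent_ascents_imp_less that by blast
  then show False using assms(2) by (fastforce simp: inversions_def)
qed

lemma simple_word_of_card_inversions_inv:
  "x permutes {1..n} \<Longrightarrow> card (inversions n (inv x)) = k \<Longrightarrow>
     \<exists>ws. length ws = k \<and> set ws \<subseteq> simple_transps n \<and> x = foldr (\<circ>) ws id"
proof (induction k arbitrary: x)
  case 0
  have "inv x permutes {1..n}" using "0.prems"(1) by (rule permutes_inv)
  moreover have "inv x a < inv x b" if "1 \<le> a" "a < b" "b \<le> n" for a b
  proof -
    have "inversions n (inv x) = {}" using "0.prems"(2) finite_inversions by simp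
    then have "\<not> inv x b < inv x a" using that by (auto simp: inversions_def)
    moreover have "inv x a \<noteq> inv x b"
      using that permutes_inj[OF permutes_inv[OF "0.prems"(1)]] by (auto dest: injD)
    ultimately show ?thesis by simp
  qed
  ultimately have "inv x = id" by (rule increasing_permutes_eq_id)
  then have "x = id" using permutes_inv_inv[OF "0.prems"(1)] by (metis inv_id)
  then show ?case by (intro exI[of _ "[]"]) simp
next
  case (Suc k)
  have inj: "inj_on (inv x) {1..n}" using permutes_inv[OF Suc.prems(1)] by (rule permutes_inj_on)
  obtain i where i: "1 \<le> i" "i < n" "inv x (Suc i) < inv x i"
    using exists_adjacent_descent[OF inj] Suc.prems(2) by force
  let ?s = "transpose i (Suc i)"
  have s: "?s \<in> simple_transps n" using i by (auto simp: simple_transps_def)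
  have x': "?s \<circ> x permutes {1..n}"
    using Suc.prems(1) i by (intro permutes_compose permutes_swap_id) auto
  have "inv (?s \<circ> x) = inv x \<circ> ?s"
    using permutes_bij[OF Suc.prems(1)] by (rule inv_transpose_comp)
  then have "card (inversions n (inv (?s \<circ> x))) = k"
    using card_inversions_comp_adjacent_transpose_descent[OF i] Suc.prems(2) by simp
  then obtain ws where ws: "length ws = k" "set ws \<subseteq> simple_transps n" "?s \<circ> x = foldr (\<circ>) ws id"
    using Suc.IH[OF x'] by blast
  have "x = ?s \<circ> (?s \<circ> x)" by (simp add: comp_assoc[symmetric])
  also have "\<dots> = foldr (\<circ>) (?s # ws) id" by (simp only: foldr_comp_Cons ws(3))
  finally have "x = foldr (\<circ>) (?s # ws) id" .
  moreover have "length (?s # ws) = Suc k" "set (?s # ws) \<subseteq> simple_transps n" using ws(1,2) s by auto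
  ultimately show ?case by blast
qed

lemma len_eq_card_inversions_inv: "x permutes {1..n} \<Longrightarrow> len n x = card (inversions n (inv x))"
  unfolding len_def
proof (rule Least_equality)
  show "\<exists>ws. length ws = card (inversions n (inv x)) \<and> set ws \<subseteq> simple_transps n \<and> x = foldr (\<circ>) ws id"
    if "x permutes {1..n}" using simple_word_of_card_inversions_inv[OF that] by blast
  show "card (inversions n (inv x)) \<le> k"
    if "\<exists>ws. length ws = k \<and> set ws \<subseteq> simple_transps n \<and> x = foldr (\<circ>) ws id" for k
    using that card_inversions_inv_foldr_le by blast
qed

lemma len_less_transpose_comp_imp_inv_less:
  assumes x: "x permutes {1..n}" and ab: "\<alpha> < \<beta>" "\<alpha> \<in> {1..n}" "\<beta> \<in> {1..n}"
    and len: "len n x < len n (transpose \<alpha> \<beta> \<circ> x)"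
  shows "inv x \<alpha> < inv x \<beta>"
proof (rule ccontr)
  let ?t = "transpose \<alpha> \<beta>"
  let ?\<sigma> = "inv (?t \<circ> x)"
  have y: "?t \<circ> x permutes {1..n}" using x ab by (intro permutes_compose permutes_swap_id) auto
  have \<sigma>: "?\<sigma> = inv x \<circ> ?t" using permutes_bij[OF x] by (rule inv_transpose_comp)
  assume "\<not> inv x \<alpha> < inv x \<beta>"
  moreover have "inv x \<alpha> \<noteq> inv x \<beta>" using ab permutes_inj[OF permutes_inv[OF x]] by (auto dest: injD)
  ultimately have "?\<sigma> \<alpha> < ?\<sigma> \<beta>" unfolding \<sigma> by simp
  moreover have "inj_on ?\<sigma> {1..n}" using permutes_inv[OF y] by (rule permutes_inj_on)
  ultimately have "card (inversions n ?\<sigma>) < card (inversions n (?\<sigma> \<circ> ?t))"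
    using ab by (intro card_inversions_comp_transpose_less) auto
  moreover have "?\<sigma> \<circ> ?t = inv x" unfolding \<sigma> by (simp add: comp_assoc)
  ultimately have "len n (?t \<circ> x) < len n x"
    using len_eq_card_inversions_inv[OF x] len_eq_card_inversions_inv[OF y] by simp
  then show False using len by simp
qed

section \<open>Products of two transpositions\<close>

definition swap_rel :: "('a \<Rightarrow> 'a) \<Rightarrow> ('a \<times> 'a) set" where
  "swap_rel t = {(a, b). a \<noteq> b \<and> t = transpose a b}"

lemma transpose_eq_transpose_iff:
  "a \<noteq> b \<Longrightarrow> transpose a b = transpose c d \<longleftrightarrow> (c = a \<and> d = b) \<or> (c = b \<and> d = a)"
  by (metis transpose_apply_first transpose_apply_second transpose_commute transpose_eq_iff)

lemma swap_rel_transpose: "a \<noteq> b \<Longrightarrow> swap_rel (transpose a b) = {(a, b), (b, a)}"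
  by (auto simp: swap_rel_def transpose_eq_transpose_iff transpose_commute)

lemma transpose_comp_transpose_moves:
  assumes "a \<noteq> b" "c \<noteq> d" "transpose a b \<noteq> transpose c d" "k \<in> {a, b, c, d}"
  shows "(transpose a b \<circ> transpose c d) k \<noteq> k"
proof
  assume "(transpose a b \<circ> transpose c d) k = k"
  then have "(a = c \<and> b = d) \<or> (a = d \<and> b = c)"
    using assms by (auto simp: transpose_def split: if_splits)
  then show False using assms(3) by (auto simp: transpose_commute)
qed

lemma transpose_comp_eq_imp:
  "transpose e f \<circ> transpose g h = \<pi> \<Longrightarrow> transpose e f = \<pi> \<circ> transpose g h"
  by (metis comp_assoc comp_id transpose_comp_involutory)

lemma transpose_factorizations_disjoint:
  assumes dist: "distinct [a, b, c, d]"
    and "g \<noteq> h" "e \<noteq> f" "transpose e f \<noteq> transpose g h"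
    and eq: "transpose e f \<circ> transpose g h = transpose c d \<circ> transpose a b"
  shows "(transpose g h = transpose a b \<and> transpose e f = transpose c d) \<or>
         (transpose g h = transpose c d \<and> transpose e f = transpose a b)"
proof -
  let ?\<pi> = "transpose c d \<circ> transpose a b"
  have "?\<pi> g \<noteq> g" "?\<pi> h \<noteq> h"
    using transpose_comp_transpose_moves[of e f g h] assms eq by auto
  then have gh: "g \<in> {a, b, c, d}" "h \<in> {a, b, c, d}"
    by (auto simp: transpose_def split: if_splits)
  have ef: "transpose e f = ?\<pi> \<circ> transpose g h" using eq by (rule transpose_comp_eq_imp)
  have "{g, h} = {a, b} \<or> {g, h} = {c, d}"
  proof (rule ccontr)
    assume "\<not> ?thesis"
    then have "transpose e f (transpose e f g) \<noteq> g"
      unfolding ef using gh dist \<open>g \<noteq> h\<close> by (auto simp: transpose_def)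
    then show False by simp
  qed
  then have "transpose g h = transpose a b \<or> transpose g h = transpose c d"
    using \<open>g \<noteq> h\<close> by (auto simp: doubleton_eq_iff transpose_commute)
  then show ?thesis
  proof
    assume t: "transpose g h = transpose a b"
    then show ?thesis unfolding ef t by (simp add: comp_assoc)
  next
    assume t: "transpose g h = transpose c d"
    have "transpose e f = transpose a b"
      unfolding ef t using dist by (auto simp: fun_eq_iff transpose_def)
    then show ?thesis using t by simp
  qed
qed

lemma transpose_factorizations_three_cycle:
  assumes dist: "distinct [a, b, c]"
    and "g \<noteq> h" "e \<noteq> f" "transpose e f \<noteq> transpose g h"
    and eq: "transpose e f \<circ> transpose g h = transpose b c \<circ> transpose a b"
  shows "(transpose g h = transpose a b \<and> transpose e f = transpose b c) \<or>
         (transpose g h = transpose b c \<and> transpose e f = transpose a c) \<or>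
         (transpose g h = transpose a c \<and> transpose e f = transpose a b)"
proof -
  let ?\<pi> = "transpose b c \<circ> transpose a b"
  have "?\<pi> g \<noteq> g" "?\<pi> h \<noteq> h"
    using transpose_comp_transpose_moves[of e f g h] assms eq by auto
  then have "g \<in> {a, b, c}" "h \<in> {a, b, c}"
    by (auto simp: transpose_def split: if_splits)
  then have "transpose g h = transpose a b \<or> transpose g h = transpose b c \<or> transpose g h = transpose a c"
    using \<open>g \<noteq> h\<close> by (auto simp: transpose_commute)
  moreover have "transpose e f = ?\<pi> \<circ> transpose g h" using eq by (rule transpose_comp_eq_imp)
  ultimately show ?thesis
    using dist by (elim disjE) (auto simp: fun_eq_iff transpose_def)
qed

lemma overlapping_transposes_normal_form:
  assumes "a \<noteq> b" "c \<noteq> d" "transpose a b \<noteq> transpose c d" "{a, b} \<inter> {c, d} \<noteq> {}"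
  obtains a' b' c' where "distinct [a', b', c']"
    "transpose a b = transpose a' b'" "transpose c d = transpose b' c'"
proof -
  from assms(4) consider "c = a" | "c = b" | "d = a" | "d = b" by auto
  then show thesis
  proof cases
    case 1
    then have "d \<noteq> b" using assms(3) by auto
    with 1 show ?thesis using assms that[of b a d] by (auto simp: transpose_commute)
  next
    case 2
    then have "d \<noteq> a" using assms(3) by (auto simp: transpose_commute)
    with 2 show ?thesis using assms that[of a b d] by auto
  next
    case 3
    then have "c \<noteq> b" using assms(3) by (auto simp: transpose_commute)
    with 3 show ?thesis using assms that[of b a c] by (auto simp: transpose_commute)
  next
    case 4
    then have "c \<noteq> a" using assms(3) by (auto simp: transpose_commute)
    with 4 show ?thesis using assms that[of a b c] by (auto simp: transpose_commute)
  qed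
qed

section \<open>Bruhat edges and diamonds\<close>

lemma bruhat_edge_permutes:
  assumes "bruhat_edge n x y"
  shows "x permutes {1..n}" "y permutes {1..n}"
  using assms by (auto simp: bruhat_edge_def perms_def)

lemma bruhat_edge_len_less: "bruhat_edge n x y \<Longrightarrow> len n x < len n y"
  by (simp add: bruhat_edge_def)

lemma bruhat_edge_labelE:
  assumes "bruhat_edge n x y"
  obtains \<alpha> \<beta> where "\<alpha> \<noteq> \<beta>" "\<alpha> \<in> {1..n}" "\<beta> \<in> {1..n}" "label x y = transpose \<alpha> \<beta>"
  using assms by (auto simp: bruhat_edge_def transps_def)

lemma bruhat_edge_eq_label_comp: "bruhat_edge n x y \<Longrightarrow> y = label x y \<circ> x"
  using bruhat_edge_permutes(1) by (fastforce simp: label_def comp_assoc permutes_inv_o(2))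

lemma bruhat_edge_inv:
  "bruhat_edge n x y \<Longrightarrow> label x y = transpose \<alpha> \<beta> \<Longrightarrow> inv y = inv x \<circ> transpose \<alpha> \<beta>"
  by (metis bruhat_edge_eq_label_comp bruhat_edge_permutes(1) inv_transpose_comp permutes_bij)

lemma bruhat_edge_ascent:
  assumes e: "bruhat_edge n x y" and l: "label x y = transpose \<alpha> \<beta>" and "\<alpha> \<noteq> \<beta>"
  shows "\<alpha> < \<beta> \<longleftrightarrow> inv x \<alpha> < inv x \<beta>"
proof -
  have x: "x permutes {1..n}" using e by (rule bruhat_edge_permutes)
  obtain a b where "a \<noteq> b" "a \<in> {1..n}" "b \<in> {1..n}" "label x y = transpose a b"
    using e by (rule bruhat_edge_labelE)
  then have \<alpha>\<beta>: "\<alpha> \<in> {1..n}" "\<beta> \<in> {1..n}" using l transpose_eq_transpose_iff by metis+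
  have len: "len n x < len n (transpose \<alpha> \<beta> \<circ> x)"
    using bruhat_edge_len_less[OF e] bruhat_edge_eq_label_comp[OF e] l by simp
  show ?thesis
  proof (cases "\<alpha> < \<beta>")
    case True
    then show ?thesis using len_less_transpose_comp_imp_inv_less[OF x True \<alpha>\<beta>] len by simp
  next
    case False
    then have "\<beta> < \<alpha>" using \<open>\<alpha> \<noteq> \<beta>\<close> by simp
    then have "inv x \<beta> < inv x \<alpha>"
      using len_less_transpose_comp_imp_inv_less[OF x _ \<alpha>\<beta>(2,1)] len by (simp add: transpose_commute)
    then show ?thesis using False by simp
  qed
qed

lemma bruhat_two_stepE:
  assumes "bruhat_edge n x y" "bruhat_edge n y z"
  obtains a b c d where "a \<noteq> b" "c \<noteq> d" "label x y = transpose a b" "label y z = transpose c d"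
    "transpose c d \<noteq> transpose a b" "transpose c d \<circ> transpose a b = z \<circ> inv x"
proof -
  obtain a b where ab: "a \<noteq> b" "label x y = transpose a b" using assms(1) by (rule bruhat_edge_labelE)
  obtain c d where cd: "c \<noteq> d" "label y z = transpose c d" using assms(2) by (rule bruhat_edge_labelE)
  have x: "x permutes {1..n}" using assms(1) by (rule bruhat_edge_permutes)
  have z: "z = transpose c d \<circ> transpose a b \<circ> x"
    using bruhat_edge_eq_label_comp[OF assms(1)] bruhat_edge_eq_label_comp[OF assms(2)] ab cd
    by (simp add: comp_assoc)
  then have "transpose c d \<circ> transpose a b = z \<circ> inv x"
    by (simp add: comp_assoc permutes_inv_o(1)[OF x])
  moreover have "transpose c d \<noteq> transpose a b"
  proof
    assume "transpose c d = transpose a b"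
    then have "z = x" using z by (simp add: comp_assoc[symmetric])
    then show False using assms by (metis bruhat_edge_len_less less_asym)
  qed
  ultimately show thesis using that ab cd by blast
qed

lemma bruhat_two_step_labels_differ:
  assumes "bruhat_edge n x y" "bruhat_edge n y z"
  shows "label y z \<noteq> label x y"
  using assms by (rule bruhat_two_stepE) auto

lemma bruhat_edge_comp_inv:
  "bruhat_edge n x y \<Longrightarrow> label x y = transpose a b \<Longrightarrow> (s \<circ> x) \<circ> inv y = s \<circ> transpose a b"
  using bruhat_edge_inv[of n x y a b] bruhat_edge_permutes(1)[of n x y]
  by (simp add: comp_assoc o_assoc[of x] permutes_inv_o(1))

lemma bruhat_two_step_ascents:
  assumes "bruhat_edge n x y" "bruhat_edge n y z"
    and "label x y = transpose p q" "label y z = transpose r s" "p \<noteq> q" "r \<noteq> s"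
  shows "p < q \<longleftrightarrow> inv x p < inv x q"
    and "r < s \<longleftrightarrow> inv x (transpose p q r) < inv x (transpose p q s)"
  using bruhat_edge_ascent[OF assms(1,3,5)] bruhat_edge_ascent[OF assms(2,4,6)]
    bruhat_edge_inv[OF assms(1,3)] by simp_all

lemma bruhat_two_step_disjoint:
  assumes "bruhat_edge n x y" "bruhat_edge n y z"
    and "distinct [a, b, c, d]" "z \<circ> inv x = transpose c d \<circ> transpose a b"
  shows "label x y = transpose a b \<or> label x y = transpose c d"
proof -
  obtain g h e f where gh: "g \<noteq> h" "e \<noteq> f" "label x y = transpose g h"
    "transpose e f \<noteq> transpose g h" "transpose e f \<circ> transpose g h = z \<circ> inv x"
    using assms(1,2) by (rule bruhat_two_stepE)
  then show ?thesis using transpose_factorizations_disjoint[OF assms(3) gh(1,2,4)] assms(4) by auto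
qed

lemma bruhat_two_step_three_cycle:
  assumes e: "bruhat_edge n x y" "bruhat_edge n y z"
    and dist: "distinct [a, b, c]" and \<pi>: "z \<circ> inv x = transpose b c \<circ> transpose a b"
  defines "P \<equiv> inv x"
  shows "(label x y = transpose a b \<and> (a < b \<longleftrightarrow> P a < P b) \<and> (b < c \<longleftrightarrow> P a < P c)) \<or>
         (label x y = transpose b c \<and> (b < c \<longleftrightarrow> P b < P c) \<and> (a < c \<longleftrightarrow> P a < P b)) \<or>
         (label x y = transpose a c \<and> (a < c \<longleftrightarrow> P a < P c) \<and> (a < b \<longleftrightarrow> P c < P b))"
proof -
  obtain g h e f where gh: "g \<noteq> h" "e \<noteq> f" "label x y = transpose g h" "label y z = transpose e f"
    "transpose e f \<noteq> transpose g h" "transpose e f \<circ> transpose g h = z \<circ> inv x"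
    using e by (rule bruhat_two_stepE)
  have ne: "a \<noteq> b" "b \<noteq> c" "a \<noteq> c" using dist by auto
  from transpose_factorizations_three_cycle[OF dist gh(1,2,5)] gh(6) \<pi>
  consider "transpose g h = transpose a b" "transpose e f = transpose b c"
    | "transpose g h = transpose b c" "transpose e f = transpose a c"
    | "transpose g h = transpose a c" "transpose e f = transpose a b"
    by auto
  then show ?thesis
  proof cases
    case 1
    then show ?thesis
      using bruhat_two_step_ascents[OF e, of a b b c] gh(3,4) ne unfolding P_def by simp
  next
    case 2
    then show ?thesis
      using bruhat_two_step_ascents[OF e, of b c a c] gh(3,4) ne unfolding P_def by simp
  next
    case 3
    then show ?thesis
      using bruhat_two_step_ascents[OF e, of a c a b] gh(3,4) ne unfolding P_def by simp
  qed
qed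

text \<open>The middle vertices of \<open>x \<rightarrow> y \<rightarrow> z\<close> correspond to the first factors of \<open>z x\<^sup>-\<^sup>1\<close>. A product of two
  disjoint transpositions has two such factorisations; a 3-cycle has three, but the ascent
  conditions they impose on \<open>x\<^sup>-\<^sup>1\<close> cannot hold simultaneously.\<close>
lemma bruhat_diamond_at_most_two_midpoints:
  assumes e: "bruhat_edge n x y1" "bruhat_edge n y1 z" "bruhat_edge n x y2" "bruhat_edge n y2 z"
     "bruhat_edge n x y3" "bruhat_edge n y3 z"
  shows "y1 = y2 \<or> y1 = y3 \<or> y2 = y3"
proof (rule ccontr)
  assume "\<not> ?thesis"
  then have ne: "label x y1 \<noteq> label x y2" "label x y1 \<noteq> label x y3" "label x y2 \<noteq> label x y3"
    using bruhat_edge_eq_label_comp[OF e(1)] bruhat_edge_eq_label_comp[OF e(3)]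
      bruhat_edge_eq_label_comp[OF e(5)] by metis+
  obtain a b c d where abcd: "a \<noteq> b" "c \<noteq> d" "label x y1 = transpose a b"
    "transpose c d \<noteq> transpose a b" "transpose c d \<circ> transpose a b = z \<circ> inv x"
    using e(1,2) by (rule bruhat_two_stepE)
  show False
  proof (cases "{a, b} \<inter> {c, d} = {}")
    case True
    then have dist: "distinct [a, b, c, d]" using abcd by auto
    have "label x y = transpose a b \<or> label x y = transpose c d"
      if "bruhat_edge n x y" "bruhat_edge n y z" for y
      using bruhat_two_step_disjoint[OF that dist] abcd(5) by simp
    from this[OF e(1,2)] this[OF e(3,4)] this[OF e(5,6)] show False using ne by auto
  next
    case False
    obtain a' b' c' where abc: "distinct [a', b', c']"
      "transpose a b = transpose a' b'" "transpose c d = transpose b' c'"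
      using overlapping_transposes_normal_form[OF abcd(1,2) abcd(4)[symmetric] False] .
    then have \<pi>: "z \<circ> inv x = transpose b' c' \<circ> transpose a' b'" using abcd(5) by simp
    let ?P = "inv x"
    define V1 where "V1 \<longleftrightarrow> (a' < b' \<longleftrightarrow> ?P a' < ?P b') \<and> (b' < c' \<longleftrightarrow> ?P a' < ?P c')"
    define V2 where "V2 \<longleftrightarrow> (b' < c' \<longleftrightarrow> ?P b' < ?P c') \<and> (a' < c' \<longleftrightarrow> ?P a' < ?P b')"
    define V3 where "V3 \<longleftrightarrow> (a' < c' \<longleftrightarrow> ?P a' < ?P c') \<and> (a' < b' \<longleftrightarrow> ?P c' < ?P b')"
    have "(label x y = transpose a' b' \<and> V1) \<or> (label x y = transpose b' c' \<and> V2) \<or>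
        (label x y = transpose a' c' \<and> V3)"
      if "bruhat_edge n x y" "bruhat_edge n y z" for y
      unfolding V1_def V2_def V3_def by (rule bruhat_two_step_three_cycle[OF that abc(1) \<pi>])
    from this[OF e(1,2)] this[OF e(3,4)] this[OF e(5,6)] have "V1 \<and> V2 \<and> V3" using ne by auto
    moreover have "?P a' \<noteq> ?P b'" "?P b' \<noteq> ?P c'" "?P a' \<noteq> ?P c'"
      using abc(1) permutes_inj[OF permutes_inv[OF bruhat_edge_permutes(1)[OF e(1)]]]
      by (auto dest: injD)
    ultimately show False unfolding V1_def V2_def V3_def by linarith
  qed
qed

section \<open>Flips preserve the label relation\<close>

lemma swap_rel_two_factorizations:
  assumes ab: "a \<noteq> b" and cd: "c \<noteq> d" and ne: "transpose c d \<noteq> transpose a b"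
    and "a' \<noteq> b'" "c' \<noteq> d'" "transpose c' d' \<noteq> transpose a' b'"
    and eq: "transpose c' d' \<circ> transpose a' b' = transpose c d \<circ> transpose a b"
  shows "swap_rel (transpose a' b') \<union> swap_rel (transpose c' d') \<subseteq>
    (swap_rel (transpose a b) \<union> swap_rel (transpose c d))\<^sup>*"
proof (cases "{a, b} \<inter> {c, d} = {}")
  case True
  then have "distinct [a, b, c, d]" using ab cd by auto
  from transpose_factorizations_disjoint[OF this assms(4-7)] show ?thesis by auto
next
  case False
  obtain x y z where xyz: "distinct [x, y, z]" "transpose a b = transpose x y" "transpose c d = transpose y z"
    using overlapping_transposes_normal_form[OF ab cd ne[symmetric] False] .
  then have ne: "x \<noteq> y" "y \<noteq> z" "x \<noteq> z" by auto
  let ?R = "swap_rel (transpose a b) \<union> swap_rel (transpose c d)"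
  have R: "?R = {(x, y), (y, x), (y, z), (z, y)}"
    unfolding xyz(2,3) swap_rel_transpose[OF ne(1)] swap_rel_transpose[OF ne(2)] by auto
  have "(x, y) \<in> ?R\<^sup>*" "(y, x) \<in> ?R\<^sup>*" "(y, z) \<in> ?R\<^sup>*" "(z, y) \<in> ?R\<^sup>*"
    unfolding R by auto
  then have "(x, z) \<in> ?R\<^sup>*" "(z, x) \<in> ?R\<^sup>*" by (meson rtrancl_trans)+
  then have "{x, y, z} \<times> {x, y, z} \<subseteq> ?R\<^sup>*"
    using \<open>(x, y) \<in> ?R\<^sup>*\<close> \<open>(y, x) \<in> ?R\<^sup>*\<close> \<open>(y, z) \<in> ?R\<^sup>*\<close> \<open>(z, y) \<in> ?R\<^sup>*\<close> by auto
  moreover have "transpose c' d' \<circ> transpose a' b' = transpose y z \<circ> transpose x y" using eq xyz by simp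
  from transpose_factorizations_three_cycle[OF xyz(1) assms(4-6) this]
  have "swap_rel (transpose a' b') \<union> swap_rel (transpose c' d') \<subseteq> {x, y, z} \<times> {x, y, z}"
  proof (elim disjE conjE)
    assume "transpose a' b' = transpose x y" "transpose c' d' = transpose y z"
    then show ?thesis using ne by (simp add: swap_rel_transpose)
  next
    assume "transpose a' b' = transpose y z" "transpose c' d' = transpose x z"
    then show ?thesis using ne by (simp add: swap_rel_transpose)
  next
    assume "transpose a' b' = transpose x z" "transpose c' d' = transpose x y"
    then show ?thesis using ne by (simp add: swap_rel_transpose)
  qed
  ultimately show ?thesis by blast
qed

lemma bruhat_diamond_swap_rel:
  assumes "bruhat_edge n x y" "bruhat_edge n y z" "bruhat_edge n x y'" "bruhat_edge n y' z"
  shows "swap_rel (label x y') \<union> swap_rel (label y' z) \<subseteq> (swap_rel (label x y) \<union> swap_rel (label y z))\<^sup>*"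
proof -
  obtain a b c d where abcd: "a \<noteq> b" "c \<noteq> d" "label x y = transpose a b" "label y z = transpose c d"
    "transpose c d \<noteq> transpose a b" "transpose c d \<circ> transpose a b = z \<circ> inv x"
    using assms(1,2) by (rule bruhat_two_stepE)
  obtain a' b' c' d' where abcd': "a' \<noteq> b'" "c' \<noteq> d'" "label x y' = transpose a' b'"
    "label y' z = transpose c' d'" "transpose c' d' \<noteq> transpose a' b'"
    "transpose c' d' \<circ> transpose a' b' = z \<circ> inv x"
    using assms(3,4) by (rule bruhat_two_stepE)
  show ?thesis
    unfolding abcd(3,4) abcd'(3,4)
    by (rule swap_rel_two_factorizations[OF abcd(1,2,5) abcd'(1,2,5)]) (simp add: abcd(6) abcd'(6))
qed

lemma rtrancl_Un_cong:
  assumes "A' \<subseteq> A\<^sup>*" "A \<subseteq> A'\<^sup>*"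
  shows "(A \<union> R)\<^sup>* = (A' \<union> R)\<^sup>*"
proof
  show "(A' \<union> R)\<^sup>* \<subseteq> (A \<union> R)\<^sup>*"
    using assms(1) rtrancl_mono[of A "A \<union> R"] by (intro rtrancl_subset_rtrancl) auto
  show "(A \<union> R)\<^sup>* \<subseteq> (A' \<union> R)\<^sup>*"
    using assms(2) rtrancl_mono[of A' "A' \<union> R"] by (intro rtrancl_subset_rtrancl) auto
qed

definition label_rel :: "(nat \<Rightarrow> nat) list \<Rightarrow> (nat \<times> nat) set" where
  "label_rel r = (\<Union>k \<in> {k. Suc k < length r}. swap_rel (label (r ! k) (r ! Suc k)))"

lemma label_rel_split:
  assumes "0 < i" "Suc i < length r"
  shows "label_rel r = swap_rel (label (r ! (i - 1)) (r ! i)) \<union> swap_rel (label (r ! i) (r ! Suc i)) \<union>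
    (\<Union>k \<in> {k. Suc k < length r} - {i - 1, i}. swap_rel (label (r ! k) (r ! Suc k)))"
proof -
  have "{k. Suc k < length r} = {i - 1, i} \<union> ({k. Suc k < length r} - {i - 1, i})"
    using assms by auto
  then have "label_rel r = (\<Union>k \<in> {i - 1, i}. swap_rel (label (r ! k) (r ! Suc k))) \<union>
      (\<Union>k \<in> {k. Suc k < length r} - {i - 1, i}. swap_rel (label (r ! k) (r ! Suc k)))"
    unfolding label_rel_def by (metis UN_Un)
  then show ?thesis using assms by simp
qed

lemma paths_update_midpoint:
  assumes r: "r \<in> paths n h u v" and i: "0 < i" "i < h"
    and e: "bruhat_edge n (r ! (i - 1)) y" "bruhat_edge n y (r ! Suc i)"
  shows "r[i := y] \<in> paths n h u v"
proof -
  have len: "length r = Suc h" and "\<forall>k<h. bruhat_edge n (r ! k) (r ! Suc k)"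
    using r by (auto simp: paths_def)
  then have "bruhat_edge n (r[i := y] ! k) (r[i := y] ! Suc k)" if "k < h" for k
    using that i e by (cases "k = i - 1"; cases "k = i") auto
  then show ?thesis using r i len by (simp add: paths_def)
qed

lemma label_rel_update_midpoint:
  assumes r: "r \<in> paths n h u v" and i: "0 < i" "i < h"
    and e: "bruhat_edge n (r ! (i - 1)) y" "bruhat_edge n y (r ! Suc i)"
  shows "(label_rel (r[i := y]))\<^sup>* = (label_rel r)\<^sup>*"
proof -
  let ?r' = "r[i := y]"
  have len: "length r = Suc h" and edges: "\<And>k. k < h \<Longrightarrow> bruhat_edge n (r ! k) (r ! Suc k)"
    using r by (auto simp: paths_def)
  obtain j where j: "i = Suc j" using i(1) gr0_implies_Suc by blast
  have e': "bruhat_edge n (r ! (i - 1)) (r ! i)" "bruhat_edge n (r ! i) (r ! Suc i)"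
    using edges[of j] edges[of i] i unfolding j by simp_all
  let ?A = "swap_rel (label (r ! (i - 1)) (r ! i)) \<union> swap_rel (label (r ! i) (r ! Suc i))"
  let ?A' = "swap_rel (label (r ! (i - 1)) y) \<union> swap_rel (label y (r ! Suc i))"
  let ?R = "\<Union>k \<in> {k. Suc k < length r} - {i - 1, i}. swap_rel (label (r ! k) (r ! Suc k))"
  have split: "label_rel r = ?A \<union> ?R" using label_rel_split[of i r] i len by simp
  have split': "label_rel ?r' = ?A' \<union> ?R"
  proof -
    have "?r' ! k = r ! k" "?r' ! Suc k = r ! Suc k" if "k \<notin> {i - 1, i}" for k
      using that i by auto
    then show ?thesis using label_rel_split[of i ?r'] i len by simp
  qed
  have "?A' \<subseteq> ?A\<^sup>*" "?A \<subseteq> ?A'\<^sup>*"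
    using bruhat_diamond_swap_rel[OF e' e] bruhat_diamond_swap_rel[OF e e'] by simp_all
  then show ?thesis unfolding split split' by (simp add: rtrancl_Un_cong)
qed

lemma flip_cases:
  assumes r: "r \<in> paths n h u v" and i: "0 < i" "i < h"
  obtains "flip n i r = r"
    | y where "bruhat_edge n (r ! (i - 1)) y" "bruhat_edge n y (r ! Suc i)" "flip n i r = r[i := y]"
proof -
  let ?Q = "\<lambda>y. y \<noteq> r ! i \<and> bruhat_edge n (r ! (i - 1)) y \<and> bruhat_edge n y (r ! Suc i)"
  show thesis
  proof (cases "\<exists>y. ?Q y")
    case False
    have "flip n i r = r" unfolding flip_def using False by (rule if_not_P)
    then show thesis by (rule that(1))
  next
    case True
    obtain j where j: "i = Suc j" using i(1) gr0_implies_Suc by blast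
    have "bruhat_edge n (r ! (i - 1)) (r ! i)" "bruhat_edge n (r ! i) (r ! Suc i)"
      using r i unfolding paths_def j by auto
    then have "\<exists>!y. ?Q y"
      using True bruhat_diamond_at_most_two_midpoints by (metis (no_types, lifting))
    then have "?Q (THE y. ?Q y)" by (rule theI')
    moreover have "flip n i r = r[i := THE y. ?Q y]" unfolding flip_def using True by (rule if_P)
    ultimately show thesis using that(2) by blast
  qed
qed

lemma flip_rel_rtrancl_invariants:
  assumes "p \<in> paths n h u v" "(p, q) \<in> (flip_rel n h)\<^sup>*"
  shows "q \<in> paths n h u v \<and> (label_rel q)\<^sup>* = (label_rel p)\<^sup>*"
  using assms(2)
proof (induction rule: rtrancl_induct)
  case (step q q')
  then obtain i where "q' = flip n i q" "1 \<le> i" "i \<le> h - 1" by (auto simp: flip_rel_def)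
  then have i: "0 < i" "i < h" "q' = flip n i q" by auto
  from step.IH have q: "q \<in> paths n h u v" ..
  from q i(1,2) show ?case
  proof (cases rule: flip_cases)
    case 1
    then show ?thesis using step.IH i(3) by simp
  next
    case (2 y)
    then show ?thesis
      using step.IH i paths_update_midpoint[OF q i(1,2)] label_rel_update_midpoint[OF q i(1,2)] by simp
  qed
qed (use assms(1) in simp)

section \<open>Three-step paths to a transposition\<close>

definition strictly_between :: "nat \<Rightarrow> nat \<Rightarrow> nat \<Rightarrow> bool" where
  "strictly_between a z b \<longleftrightarrow> a < z \<and> z < b \<or> b < z \<and> z < a"

lemma strictly_between_commute: "strictly_between a z b \<longleftrightarrow> strictly_between b z a"
  by (auto simp: strictly_between_def)

lemma strictly_between_same_orientation:
  assumes "strictly_between a z b" "strictly_between (Q a) (Q z) (Q b)"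
    and "x \<in> {a, b, z}" "y \<in> {a, b, z}" "x \<noteq> y"
  shows "(x < y \<longleftrightarrow> Q x < Q y) \<longleftrightarrow> (a < b \<longleftrightarrow> Q a < Q b)"
  using assms unfolding strictly_between_def by auto

lemma bruhat_three_step_first_label_overlaps:
  assumes e1: "bruhat_edge n x y1" and e2: "bruhat_edge n y1 y2" and e3: "bruhat_edge n y2 y3"
    and y3: "y3 = transpose c d \<circ> x" and "c \<noteq> d" and t1: "label x y1 = transpose a b" "a \<noteq> b"
  shows "transpose a b \<noteq> transpose c d" "{a, b} \<inter> {c, d} \<noteq> {}"
proof -
  obtain g h e f where t23: "g \<noteq> h" "e \<noteq> f" "label y1 y2 = transpose g h" "label y2 y3 = transpose e f"
    "transpose e f \<noteq> transpose g h" "transpose e f \<circ> transpose g h = y3 \<circ> inv y1"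
    using e2 e3 by (rule bruhat_two_stepE)
  have \<pi>: "transpose e f \<circ> transpose g h = transpose c d \<circ> transpose a b"
    using t23(6) bruhat_edge_comp_inv[OF e1 t1(1)] y3 by simp
  show "transpose a b \<noteq> transpose c d"
  proof
    assume "transpose a b = transpose c d"
    then have "transpose e f = transpose g h" using transpose_comp_eq_imp[OF \<pi>] by simp
    with t23(5) show False ..
  qed
  show "{a, b} \<inter> {c, d} \<noteq> {}"
  proof
    assume "{a, b} \<inter> {c, d} = {}"
    then have dist: "distinct [a, b, c, d]" using t1(2) \<open>c \<noteq> d\<close> by auto
    from transpose_factorizations_disjoint[OF dist t23(1,2,5) \<pi>] t1(1) t23(3,4)
      bruhat_two_step_labels_differ[OF e1 e2]
    have "label y1 y2 = transpose c d" "label y2 y3 = transpose a b" by auto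
    then have "a < b \<longleftrightarrow> inv y1 (transpose c d a) < inv y1 (transpose c d b)"
      using bruhat_two_step_ascents(2)[OF e2 e3 _ _ \<open>c \<noteq> d\<close> t1(2)] by simp
    then have "a < b \<longleftrightarrow> inv x b < inv x a" using dist bruhat_edge_inv[OF e1 t1(1)] by auto
    moreover have "inv x a \<noteq> inv x b"
      using t1(2) permutes_inj[OF permutes_inv[OF bruhat_edge_permutes(1)[OF e1]]] by (auto dest: injD)
    ultimately show False using bruhat_edge_ascent[OF e1 t1] by linarith
  qed
qed

lemma bruhat_three_step_three_cycle:
  assumes e1: "bruhat_edge n x y1" and e2: "bruhat_edge n y1 y2" and e3: "bruhat_edge n y2 y3"
    and dist: "distinct [a, b, c]" and t1: "label x y1 = transpose a b" and y3: "y3 = transpose b c \<circ> x"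
  defines "U \<equiv> swap_rel (label x y1) \<union> swap_rel (label y1 y2) \<union> swap_rel (label y2 y3)"
  shows "strictly_between b a c" "strictly_between (inv x b) (inv x a) (inv x c)"
    and "(b, a) \<in> U" "(c, a) \<in> U" "U \<subseteq> {a, b, c} \<times> {a, b, c}"
proof -
  let ?P = "inv x"
  have ne: "a \<noteq> b" "b \<noteq> c" "a \<noteq> c" using dist by auto
  obtain g h e f where t23: "g \<noteq> h" "e \<noteq> f" "label y1 y2 = transpose g h" "label y2 y3 = transpose e f"
    "transpose e f \<noteq> transpose g h" "transpose e f \<circ> transpose g h = y3 \<circ> inv y1"
    using e2 e3 by (rule bruhat_two_stepE)
  have "transpose g h \<noteq> transpose a b" using bruhat_two_step_labels_differ[OF e1 e2] t1 t23(3) by simp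
  moreover have "transpose e f \<circ> transpose g h = transpose b c \<circ> transpose a b"
    using t23(6) bruhat_edge_comp_inv[OF e1 t1] y3 by simp
  ultimately consider
      "label y1 y2 = transpose b c" "label y2 y3 = transpose a c"
    | "label y1 y2 = transpose a c" "label y2 y3 = transpose a b"
    using transpose_factorizations_three_cycle[OF dist t23(1,2,5)] t23(3,4) by auto
  note labels = this
  have P1: "inv y1 a = ?P b" "inv y1 b = ?P a" "inv y1 c = ?P c"
    using ne bruhat_edge_inv[OF e1 t1] by auto
  have asc: "a < b \<longleftrightarrow> ?P a < ?P b" using bruhat_edge_ascent[OF e1 t1 ne(1)] .
  have dP: "?P a \<noteq> ?P b" "?P b \<noteq> ?P c" "?P a \<noteq> ?P c"
    using ne permutes_inj[OF permutes_inv[OF bruhat_edge_permutes(1)[OF e1]]] by (auto dest: injD)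
  from labels have "strictly_between b a c \<and> strictly_between (?P b) (?P a) (?P c)"
  proof cases
    case 1
    with bruhat_two_step_ascents[OF e2 e3 this ne(2,3)]
    have "b < c \<longleftrightarrow> ?P a < ?P c" "a < c \<longleftrightarrow> ?P b < ?P a" using ne by (simp_all add: P1)
    with asc show ?thesis using dP ne unfolding strictly_between_def by linarith
  next
    case 2
    with bruhat_two_step_ascents[OF e2 e3 this ne(3,1)]
    have "a < c \<longleftrightarrow> ?P b < ?P c" "a < b \<longleftrightarrow> ?P c < ?P a" using ne by (simp_all add: P1)
    with asc show ?thesis using dP ne unfolding strictly_between_def by linarith
  qed
  then show "strictly_between b a c" "strictly_between (?P b) (?P a) (?P c)" by simp_all
  from labels show "(b, a) \<in> U" "(c, a) \<in> U" "U \<subseteq> {a, b, c} \<times> {a, b, c}"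
    unfolding U_def using t1 ne by (cases; auto simp: swap_rel_transpose)+
qed

lemma bruhat_three_step_transposition:
  assumes e: "bruhat_edge n x y1" "bruhat_edge n y1 y2" "bruhat_edge n y2 y3"
    and y3: "y3 = transpose c d \<circ> x" and "c \<noteq> d"
  obtains z where "strictly_between c z d" "strictly_between (inv x c) (inv x z) (inv x d)"
    "swap_rel (label x y1) \<union> swap_rel (label y1 y2) \<union> swap_rel (label y2 y3) \<subseteq> {c, d, z} \<times> {c, d, z}"
    "(c, z) \<in> swap_rel (label x y1) \<union> swap_rel (label y1 y2) \<union> swap_rel (label y2 y3)"
proof -
  obtain a1 b1 where t1: "a1 \<noteq> b1" "label x y1 = transpose a1 b1" using e(1) by (rule bruhat_edge_labelE)
  obtain a b c' where abc: "distinct [a, b, c']" "transpose a1 b1 = transpose a b" "transpose c d = transpose b c'"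
    using overlapping_transposes_normal_form[OF t1(1) \<open>c \<noteq> d\<close>]
      bruhat_three_step_first_label_overlaps[OF e y3 \<open>c \<noteq> d\<close> t1(2,1)] by metis
  then have "(c = b \<and> d = c') \<or> (c = c' \<and> d = b)"
    using transpose_eq_transpose_iff[of b c' c d] by auto
  moreover note bruhat_three_step_three_cycle[OF e abc(1) t1(2)[unfolded abc(2)] y3[unfolded abc(3)]]
  ultimately show thesis
    using that[of a] strictly_between_commute by (elim disjE) (simp_all add: insert_commute)
qed

section \<open>Positions in a 4-flipclass\<close>

lemma pathsD:
  assumes "r \<in> paths n h u v"
  shows "length r = Suc h" "r ! 0 = u" "r ! h = v" "\<And>k. k < h \<Longrightarrow> bruhat_edge n (r ! k) (r ! Suc k)"
  using assms by (auto simp: paths_def)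

lemma paths_len_less:
  assumes "r \<in> paths n h u v"
  shows "k < m \<Longrightarrow> m \<le> h \<Longrightarrow> len n (r ! k) < len n (r ! m)"
proof (induction m)
  case (Suc m)
  then show ?case
    using bruhat_edge_len_less[OF pathsD(4)[OF assms, of m]] by (cases "k = m") auto
qed simp

lemma bruhat_edge_sign: "bruhat_edge n x y \<Longrightarrow> sign y = - sign x"
proof -
  assume e: "bruhat_edge n x y"
  then obtain \<alpha> \<beta> where "\<alpha> \<noteq> \<beta>" "label x y = transpose \<alpha> \<beta>" by (rule bruhat_edge_labelE)
  moreover have "permutation x" using bruhat_edge_permutes(1)[OF e] by (auto intro: permutes_imp_permutation)
  ultimately show "sign y = - sign x"
    using bruhat_edge_eq_label_comp[OF e] by (simp add: sign_compose permutation_swap_id sign_swap_id)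
qed

lemma paths_sign:
  assumes "r \<in> paths n h u v"
  shows "k \<le> h \<Longrightarrow> sign (r ! k) = (-1) ^ k * sign u"
proof (induction k)
  case 0
  then show ?case using pathsD(2)[OF assms] by simp
next
  case (Suc k)
  then show ?case using bruhat_edge_sign[OF pathsD(4)[OF assms, of k]] by simp
qed

lemma paths_common_vertex_parity:
  assumes "p \<in> paths n h u v" "q \<in> paths n h u v" "i \<le> h" "j \<le> h" "p ! i = q ! j"
  shows "even i \<longleftrightarrow> even j"
proof -
  have "(-1 :: int) ^ i * sign u = (-1) ^ j * sign u"
    using paths_sign[OF assms(1,3)] paths_sign[OF assms(2,4)] assms(5) by simp
  then have "(-1 :: int) ^ i = (-1) ^ j" by (simp add: sign_nz)
  then show ?thesis by (cases "even i"; cases "even j") auto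
qed

lemma paths_common_vertex_interior:
  assumes "p \<in> paths n h u v" "q \<in> paths n h u v" "i < j" "j \<le> h" "p ! i = q ! j"
  shows "0 < i" "j < h"
proof -
  show "0 < i"
  proof (rule ccontr)
    assume "\<not> 0 < i"
    then have "len n (q ! 0) < len n (q ! j)" using paths_len_less[OF assms(2)] assms(3,4) by simp
    then show False using assms(5) \<open>\<not> 0 < i\<close> pathsD(2)[OF assms(1)] pathsD(2)[OF assms(2)] by simp
  qed
  show "j < h"
  proof (rule ccontr)
    assume "\<not> j < h"
    then have "len n (p ! i) < len n (p ! h)" using paths_len_less[OF assms(1)] assms(3,4) by simp
    then show False using assms(4,5) \<open>\<not> j < h\<close> pathsD(3)[OF assms(1)] pathsD(3)[OF assms(2)] by simp
  qed
qed

lemma paths_4_edges: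
  assumes "r \<in> paths n 4 u v"
  shows "bruhat_edge n u (r ! 1)" "bruhat_edge n (r ! 1) (r ! 2)" "bruhat_edge n (r ! 2) (r ! 3)"
    "bruhat_edge n (r ! 3) v"
  using pathsD(4)[OF assms, of 0] pathsD(4)[OF assms, of 1] pathsD(4)[OF assms, of 2]
    pathsD(4)[OF assms, of 3] pathsD(2,3)[OF assms] by (simp_all add: numeral_eq_Suc)

lemma label_rel_paths_4:
  assumes "r \<in> paths n 4 u v"
  shows "label_rel r = swap_rel (label u (r ! 1)) \<union> swap_rel (label (r ! 1) (r ! 2)) \<union>
    swap_rel (label (r ! 2) (r ! 3)) \<union> swap_rel (label (r ! 3) v)"
proof -
  have "{k. Suc k < length r} = {0, 1, 2, 3}" using pathsD(1)[OF assms] by auto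
  then show ?thesis using pathsD(2,3)[OF assms] unfolding label_rel_def by (simp add: numeral_eq_Suc Un_ac)
qed

lemma rtrancl_two_blocks:
  assumes "R \<subseteq> A \<times> A \<union> B \<times> B" "(x, y) \<in> R\<^sup>*" "x \<in> A" "y \<notin> A"
  shows "y \<in> B" "A \<inter> B \<noteq> {}"
proof -
  from assms(2) have "y \<in> A \<or> (y \<in> B \<and> A \<inter> B \<noteq> {})"
    by (induction rule: rtrancl_induct) (use assms(1,3) in blast)+
  then show "y \<in> B" "A \<inter> B \<noteq> {}" using assms(4) by auto
qed

lemma two_common_letters:
  assumes "z' \<in> {c, d, z}" "{c', d'} \<inter> {c, d, z} \<noteq> {}" "z \<in> {c', d', z'}" "z' \<notin> {c', d'}"
  obtains x y where "x \<in> {c, d, z}" "y \<in> {c, d, z}" "x \<in> {c', d', z'}" "y \<in> {c', d', z'}" "x \<noteq> y"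
proof (cases "z = z'")
  case True
  then show thesis using assms(2,4) that[of z] by auto
next
  case False
  then show thesis using assms(1,3) that[of z' z] by auto
qed

lemma bruhat_edge_source_orders_triple:
  assumes "bruhat_edge n a v" "label a v = transpose c d" "c \<noteq> d"
    and "strictly_between c z d" "strictly_between (inv a c) (inv a z) (inv a d)"
    and "x \<in> {c, d, z}" "y \<in> {c, d, z}" "x \<noteq> y"
  shows "x < y \<longleftrightarrow> inv a x < inv a y"
  using strictly_between_same_orientation[OF assms(4-8)] bruhat_edge_ascent[OF assms(1-3)] by simp

lemma bruhat_edge_target_inverts_triple:
  assumes e: "bruhat_edge n u a" and l: "label u a = transpose c d" and "c \<noteq> d"
    and z: "strictly_between c z d" "strictly_between (inv u c) (inv u z) (inv u d)"
    and "x \<in> {c, d, z}" "y \<in> {c, d, z}" "x \<noteq> y"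
  shows "\<not> (x < y \<longleftrightarrow> inv a x < inv a y)"
proof -
  have "z \<noteq> c" "z \<noteq> d" using z(1) by (auto simp: strictly_between_def)
  then have Q: "inv a c = inv u d" "inv a d = inv u c" "inv a z = inv u z"
    using bruhat_edge_inv[OF e l] by auto
  then have "strictly_between (inv a c) (inv a z) (inv a d)" using z(2) strictly_between_commute by simp
  moreover have "inv a c \<noteq> inv a d"
    using \<open>c \<noteq> d\<close> permutes_inj[OF permutes_inv[OF bruhat_edge_permutes(2)[OF e]]] by (auto dest: injD)
  then have "\<not> (c < d \<longleftrightarrow> inv a c < inv a d)" using bruhat_edge_ascent[OF e l \<open>c \<noteq> d\<close>] Q by auto
  ultimately show ?thesis using strictly_between_same_orientation[OF z(1) _ assms(6-8)] by simp
qed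

lemma paths_4_no_common_vertex_at_times_1_3:
  assumes p: "p \<in> paths n 4 u v" and q: "q \<in> paths n 4 u v"
    and rel: "(label_rel p)\<^sup>* = (label_rel q)\<^sup>*" and pq: "p ! 1 = q ! 3"
  shows False
proof -
  define a where "a = p ! 1"
  have ep: "bruhat_edge n u a" "bruhat_edge n a (p ! 2)" "bruhat_edge n (p ! 2) (p ! 3)"
      "bruhat_edge n (p ! 3) v"
    using paths_4_edges[OF p] unfolding a_def by simp_all
  have eq: "bruhat_edge n u (q ! 1)" "bruhat_edge n (q ! 1) (q ! 2)" "bruhat_edge n (q ! 2) a"
      "bruhat_edge n a v"
    using paths_4_edges[OF q] pq unfolding a_def by simp_all
  obtain c' d' where cd': "c' \<noteq> d'" "label u a = transpose c' d'" using ep(1) by (rule bruhat_edge_labelE)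
  obtain c d where cd: "c \<noteq> d" "label a v = transpose c d" using eq(4) by (rule bruhat_edge_labelE)
  let ?P = "inv u" and ?Q = "inv a"
  have v: "v = transpose c d \<circ> a" and a: "a = transpose c' d' \<circ> u"
    using bruhat_edge_eq_label_comp[OF eq(4)] bruhat_edge_eq_label_comp[OF ep(1)] cd(2) cd'(2) by simp_all
  obtain z where z: "strictly_between c z d" "strictly_between (?Q c) (?Q z) (?Q d)"
    "swap_rel (label a (p ! 2)) \<union> swap_rel (label (p ! 2) (p ! 3)) \<union> swap_rel (label (p ! 3) v)
      \<subseteq> {c, d, z} \<times> {c, d, z}"
    "(c, z) \<in> swap_rel (label a (p ! 2)) \<union> swap_rel (label (p ! 2) (p ! 3)) \<union> swap_rel (label (p ! 3) v)"
    by (rule bruhat_three_step_transposition[OF ep(2-4) v cd(1)])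
  obtain z' where z': "strictly_between c' z' d'" "strictly_between (?P c') (?P z') (?P d')"
    "swap_rel (label u (q ! 1)) \<union> swap_rel (label (q ! 1) (q ! 2)) \<union> swap_rel (label (q ! 2) a)
      \<subseteq> {c', d', z'} \<times> {c', d', z'}"
    "(c', z') \<in> swap_rel (label u (q ! 1)) \<union> swap_rel (label (q ! 1) (q ! 2)) \<union> swap_rel (label (q ! 2) a)"
    by (rule bruhat_three_step_transposition[OF eq(1-3) a cd'(1)])
  let ?Up = "swap_rel (label a (p ! 2)) \<union> swap_rel (label (p ! 2) (p ! 3)) \<union> swap_rel (label (p ! 3) v)"
  let ?Uq = "swap_rel (label u (q ! 1)) \<union> swap_rel (label (q ! 1) (q ! 2)) \<union> swap_rel (label (q ! 2) a)"
  have Lp: "label_rel p = swap_rel (transpose c' d') \<union> ?Up"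
    using label_rel_paths_4[OF p] cd'(2) unfolding a_def by (simp add: Un_assoc)
  have Lq: "label_rel q = ?Uq \<union> swap_rel (transpose c d)"
    using label_rel_paths_4[OF q] pq cd(2) unfolding a_def by simp
  have "label_rel p \<subseteq> {c', d'} \<times> {c', d'} \<union> {c, d, z} \<times> {c, d, z}"
    unfolding Lp swap_rel_transpose[OF cd'(1)] using z(3) by blast
  moreover have "(c', z') \<in> (label_rel p)\<^sup>*" using z'(4) rel unfolding Lq by auto
  moreover have "z' \<notin> {c', d'}" using z'(1) by (auto simp: strictly_between_def)
  ultimately have z'_in: "z' \<in> {c, d, z}" and meet: "{c', d'} \<inter> {c, d, z} \<noteq> {}"
    using rtrancl_two_blocks[of "label_rel p" "{c', d'}" "{c, d, z}" c' z'] by auto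
  have "label_rel q \<subseteq> {c, d} \<times> {c, d} \<union> {c', d', z'} \<times> {c', d', z'}"
    unfolding Lq swap_rel_transpose[OF cd(1)] using z'(3) by blast
  moreover have "(c, z) \<in> (label_rel q)\<^sup>*" using z(4) rel unfolding Lp by auto
  moreover have "z \<notin> {c, d}" using z(1) by (auto simp: strictly_between_def)
  ultimately have z_in: "z \<in> {c', d', z'}"
    using rtrancl_two_blocks[of "label_rel q" "{c, d}" "{c', d', z'}" c z] by auto
  have "x < y \<longleftrightarrow> ?Q x < ?Q y" if "x \<in> {c, d, z}" "y \<in> {c, d, z}" "x \<noteq> y" for x y
    using bruhat_edge_source_orders_triple[OF eq(4) cd(2,1) z(1,2) that] .
  moreover have "\<not> (x < y \<longleftrightarrow> ?Q x < ?Q y)" if "x \<in> {c', d', z'}" "y \<in> {c', d', z'}" "x \<noteq> y" for x y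
    using bruhat_edge_target_inverts_triple[OF ep(1) cd'(2,1) z'(1,2) that] .
  moreover obtain x y where "x \<in> {c, d, z}" "y \<in> {c, d, z}" "x \<in> {c', d', z'}" "y \<in> {c', d', z'}" "x \<noteq> y"
    using two_common_letters[OF z'_in meet z_in \<open>z' \<notin> {c', d'}\<close>] .
  ultimately show False by blast
qed

lemma flipclass_4_position_unique:
  assumes F: "is_flipclass n 4 F"
    and "p \<in> F" "q \<in> F" "i < length p" "j < length q" "p ! i = q ! j"
  shows "i = j"
proof -
  obtain u v p0 where p0: "p0 \<in> paths n 4 u v" and F_eq: "F = {q. (p0, q) \<in> (flip_rel n 4)\<^sup>*}"
    using F unfolding is_flipclass_def by blast
  have inF: "r \<in> paths n 4 u v \<and> (label_rel r)\<^sup>* = (label_rel p0)\<^sup>*" if "r \<in> F" for r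
    using flip_rel_rtrancl_invariants[OF p0] that F_eq by blast
  have no_earlier: "False" if "r \<in> F" "s \<in> F" "k < l" "l < length s" "r ! k = s ! l" for r s k l
  proof -
    have r: "r \<in> paths n 4 u v" and s: "s \<in> paths n 4 u v" and rel: "(label_rel r)\<^sup>* = (label_rel s)\<^sup>*"
      using inF[OF that(1)] inF[OF that(2)] by auto
    have "l \<le> 4" using pathsD(1)[OF s] that(4) by simp
    then have "0 < k" "l < 4" "even k \<longleftrightarrow> even l"
      using paths_common_vertex_interior[OF r s that(3) _ that(5)]
        paths_common_vertex_parity[OF r s _ _ that(5)] that(3) by auto
    then have "k = 1" "l = 3" using that(3) by presburger+
    then show False using paths_4_no_common_vertex_at_times_1_3[OF r s rel] that(5) by simp
  qed
  show "i = j"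
    using no_earlier[OF assms(2,3) _ assms(5,6)] no_earlier[OF assms(3,2) _ assms(4) assms(6)[symmetric]]
    by (cases i j rule: linorder_cases) auto
qed

lemma labelled_iso_support_time_support:
  assumes unique: "\<And>p q i j. p \<in> F \<Longrightarrow> q \<in> F \<Longrightarrow> i < length p \<Longrightarrow> j < length q \<Longrightarrow> p ! i = q ! j \<Longrightarrow> i = j"
  shows "labelled_iso (S_vert F) (S_edges F) (TS_vert F) (TS_edges F)"
proof -
  define time where "time a = (THE i. \<exists>p\<in>F. i < length p \<and> p ! i = a)" for a
  have time: "time (p ! i) = i" if "p \<in> F" "i < length p" for p i
    unfolding time_def using that unique by (intro the_equality) blast+
  define \<phi> where "\<phi> a = (a, time a)" for a
  have "inj_on \<phi> (S_vert F)" unfolding \<phi>_def by (rule inj_onI) simp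
  moreover have "\<phi> ` S_vert F = TS_vert F"
    unfolding S_vert_def TS_vert_def \<phi>_def
    by (auto simp: in_set_conv_nth time intro!: image_eqI)
  moreover have "(a, t, b) \<in> S_edges F \<longleftrightarrow> (\<phi> a, t, \<phi> b) \<in> TS_edges F" for a b t
    unfolding S_edges_def TS_edges_def \<phi>_def by (auto simp: time)
  ultimately show ?thesis unfolding labelled_iso_def bij_betw_def by blast
qed

theorem proposition7p7:
  fixes n :: nat and F :: "(nat \<Rightarrow> nat) list set"
  assumes "is_flipclass n 4 F"
  shows "labelled_iso (S_vert F) (S_edges F) (TS_vert F) (TS_edges F)"
  using flipclass_4_position_unique[OF assms] by (rule labelled_iso_support_time_support)

end
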